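(* Let $(p,\mathcal D,L)$ be a Hadamard triple on $\mathbb R$ with $p>1$, $0\in\mathcal D\subset\{0,1,2,\dots\}$, and $p=\#\mathcal D$. Then $$T_{p,\mathcal D}=[0,1)\setminus\tfrac{1}{\gcd\mathcal D}\mathbb Z .$$
   Context: A Hadamard triple on $\mathbb R$ is a triple $(p,\mathcal D,L)$ with $p>1$ an integer, $\mathcal D,L\subset\mathbb Z$ finite with $\#\mathcal D=\#L$, such that $\frac{1}{\sqrt{\#\mathcal D}}\big[e^{2\pi i d\ell/p}\big]_{\ell\in L,d\in\mathcal D}$ is unitary. For finite $A\subset\mathbb R$, $\widehat{\delta_{cA}}(\xi)=\frac1{\#A}\sum_{a\in A}e^{2\pi i ca\xi}$. $T_{p,D}$ (the Double Points Condition Set) denotes the set of $\xi\in[0,1)$ for which there exist distinct $\ell_1,\ell_2\in\{0,\dots,p-1\}$ with $\widehat{\delta_{p^{-1}D}}(\xi+\ell_i)\ne0$, $i=1,2$. Here $\gcd\mathcal D$ is the greatest common divisor of the elements of $\mathcal D$ (with $\mathcal D\ne\{0\}$). *)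

theory Defs
  imports "HOL-Analysis.Analysis"
begin

definition had_entry :: "int \<Rightarrow> int \<Rightarrow> int \<Rightarrow> complex" where
  "had_entry p d l = cis (2 * pi * of_int d * of_int l / of_int p)"

definition hadamard_triple :: "int \<Rightarrow> int set \<Rightarrow> int set \<Rightarrow> bool" where
  "hadamard_triple p D L \<longleftrightarrow> p > 1 \<and> finite D \<and> finite L \<and> card D = card L \<and>
     (let U = (\<lambda>l d. had_entry p d l / complex_of_real (sqrt (real (card D)))) in
       (\<forall>l\<in>L. \<forall>l'\<in>L. (\<Sum>d\<in>D. U l d * cnj (U l' d)) = (if l = l' then 1 else 0)) \<and>
       (\<forall>d\<in>D. \<forall>d'\<in>D. (\<Sum>l\<in>L. cnj (U l d) * U l d') = (if d = d' then 1 else 0)))"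

text \<open>Fourier transform of the uniform measure on cA: (1/#A) sum_{a in A} e^{2 pi i c a xi}.\<close>
definition delta_hat :: "real \<Rightarrow> real set \<Rightarrow> real \<Rightarrow> complex" where
  "delta_hat c A \<xi> = (1 / of_nat (card A)) * (\<Sum>a\<in>A. cis (2 * pi * c * a * \<xi>))"

definition T_set :: "int \<Rightarrow> int set \<Rightarrow> real set" where
  "T_set p D = {\<xi>. 0 \<le> \<xi> \<and> \<xi> < 1 \<and>
     (\<exists>l1 l2. l1 \<in> {0..p-1} \<and> l2 \<in> {0..p-1} \<and> l1 \<noteq> l2 \<and>
        delta_hat (1 / of_int p) (of_int ` D) (\<xi> + of_int l1) \<noteq> 0 \<and>
        delta_hat (1 / of_int p) (of_int ` D) (\<xi> + of_int l2) \<noteq> 0)}"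

end

theory Submission
  imports Defs
begin

text \<open>Write \<open>m(x) = \<Sum>d\<in>D. e^{2\<pi>idx}\<close>; then \<open>\<xi> \<in> T\<^sub>p\<^sub>,\<^sub>D\<close> iff at least two of the \<open>p\<close> values
  \<open>m((\<xi> + l)/p)\<close>, \<open>0 \<le> l < p\<close>, are nonzero. Orthogonality of the columns of the Hadamard matrix makes
  \<open>D\<close> a complete residue system mod \<open>p\<close>, so roots-of-unity sums give, for every \<open>d\<^sub>0 \<in> D\<close>,
  \<open>\<Sum>l. e^{-2\<pi>id\<^sub>0(\<xi>+l)/p} m((\<xi>+l)/p) = p\<close>, and summing over \<open>d\<^sub>0\<close> the Parseval identity
  \<open>\<Sum>l. |m((\<xi>+l)/p)|\<^sup>2 = p\<^sup>2\<close>. Hence a single nonzero value exists exactly when at some \<open>l\<^sub>0\<close> all phases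
  \<open>d(\<xi>+l\<^sub>0)/p\<close> are integers, i.e. \<open>gcd D \<cdot> (\<xi>+l\<^sub>0)/p \<in> \<int>\<close>. Since some \<open>d \<in> D\<close> is \<open>1\<close> mod \<open>p\<close>,
  \<open>gcd D\<close> is coprime to \<open>p\<close>, and such an \<open>l\<^sub>0\<close> exists iff \<open>gcd D \<cdot> \<xi> \<in> \<int>\<close>.\<close>

lemma cis_2pi_eq_1_iff: "cis (2 * pi * x) = 1 \<longleftrightarrow> x \<in> \<int>"
proof
  assume "cis (2 * pi * x) = 1"
  then have "cos (2 * pi * x) = 1"
    by (metis cis.sel(1) one_complex.sel(1))
  then obtain n :: int where "2 * pi * x = n * 2 * pi"
    by (auto simp: cos_one_2pi_int)
  then have "x = n" by simp
  then show "x \<in> \<int>" by simp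
qed simp

lemma sum_roots_of_unity:
  fixes p k :: int
  assumes "p > 0"
  shows "(\<Sum>l\<in>{0..<p}. cis (2 * pi * of_int k * of_int l / of_int p)) = (if p dvd k then of_int p else 0)"
proof -
  define z where "z = cis (2 * pi * of_int k / of_int p)"
  have "(\<Sum>l\<in>{0..<p}. cis (2 * pi * of_int k * of_int l / of_int p)) = (\<Sum>n<nat p. z ^ n)"
  proof -
    have "{0..<p} = int ` {..<nat p}"
      using assms by (simp add: image_int_atLeastLessThan lessThan_atLeast0)
    moreover have "cis (2 * pi * of_int k * of_int (int n) / of_int p) = z ^ n" for n
      unfolding z_def Complex.DeMoivre by (simp add: mult_ac)
    ultimately show ?thesis
      by (simp add: sum.reindex)
  qed
  moreover have "z ^ nat p = 1"
    using assms by (simp add: z_def Complex.DeMoivre)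
  moreover have "z = 1 \<longleftrightarrow> p dvd k"
  proof -
    have "z = 1 \<longleftrightarrow> of_int k / of_int p \<in> (\<int> :: real set)"
      unfolding z_def cis_2pi_eq_1_iff[symmetric] by (simp add: mult_ac)
    also have "\<dots> \<longleftrightarrow> p dvd k"
      using assms by (simp add: of_int_div_of_int_in_Ints_iff)
    finally show ?thesis .
  qed
  ultimately show ?thesis
    using assms by (auto simp: geometric_sum)
qed

lemma hadamard_triple_columns_orthogonal:
  assumes H: "hadamard_triple p D L" and "d \<in> D" "d' \<in> D" "d \<noteq> d'"
  shows "(\<Sum>l\<in>L. cis (2 * pi * of_int (d' - d) * of_int l / of_int p)) = 0"
proof -
  define s where "s = complex_of_real (sqrt (real (card D)))"
  have "finite D" using H by (simp add: hadamard_triple_def)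
  with \<open>d \<in> D\<close> have "s * s \<noteq> 0"
    by (auto simp: s_def card_gt_0_iff)
  have entry: "cnj (had_entry p d l / s) * (had_entry p d' l / s)
      = cis (2 * pi * of_int (d' - d) * of_int l / of_int p) / (s * s)" for l
  proof -
    have "cnj (had_entry p d l) * had_entry p d' l = cis (2 * pi * of_int (d' - d) * of_int l / of_int p)"
      unfolding had_entry_def cis_cnj cis_mult
      by (rule arg_cong[where f = cis]) (simp add: algebra_simps diff_divide_distrib)
    then show ?thesis
      by (simp add: s_def)
  qed
  have "(\<Sum>l\<in>L. cis (2 * pi * of_int (d' - d) * of_int l / of_int p)) / (s * s)
      = (\<Sum>l\<in>L. cnj (had_entry p d l / s) * (had_entry p d' l / s))"
    by (simp only: entry sum_divide_distrib)
  also have "\<dots> = 0"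
    using H assms(2-4) by (auto simp: hadamard_triple_def Let_def s_def)
  finally show ?thesis
    using \<open>s * s \<noteq> 0\<close> by simp
qed

lemma hadamard_triple_inj_on_mod:
  assumes H: "hadamard_triple p D L"
  shows "inj_on (\<lambda>d. d mod p) D"
proof (rule inj_onI, rule ccontr)
  fix d d' assume d: "d \<in> D" "d' \<in> D" "d mod p = d' mod p" "d \<noteq> d'"
  have "finite L" "card L = card D" "finite D" using H by (auto simp: hadamard_triple_def)
  with d(1) have "card L \<noteq> 0" by auto
  obtain q where "d' - d = p * q"
    using d(3) by (metis dvd_def mod_eq_dvd_iff)
  moreover have "p \<noteq> 0"
    using H by (simp add: hadamard_triple_def)
  ultimately have "2 * pi * of_int (d' - d) * of_int l / of_int p = 2 * pi * of_int (q * l)" for l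
    by simp
  then have "cis (2 * pi * of_int (d' - d) * of_int l / of_int p) = 1" for l
    by simp
  then have "(\<Sum>l\<in>L. cis (2 * pi * of_int (d' - d) * of_int l / of_int p)) = of_nat (card L)"
    by simp
  with hadamard_triple_columns_orthogonal[OF H d(1,2,4)] \<open>card L \<noteq> 0\<close> show False
    by simp
qed

lemma mod_image_eq_atLeastLessThan:
  fixes p :: int
  assumes "p > 0" "finite A" "inj_on (\<lambda>a. a mod p) A" "int (card A) = p"
  shows "(\<lambda>a. a mod p) ` A = {0..<p}"
proof (rule card_subset_eq)
  show "(\<lambda>a. a mod p) ` A \<subseteq> {0..<p}" using assms(1) by auto
  show "card ((\<lambda>a. a mod p) ` A) = card {0..<p}"
    using assms by (simp add: card_image)
qed simp

lemma Gcd_mult_in_Ints_iff: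
  fixes A :: "int set" and y :: "'a :: comm_ring_1"
  assumes "finite A"
  shows "of_int (Gcd A) * y \<in> \<int> \<longleftrightarrow> (\<forall>a\<in>A. of_int a * y \<in> \<int>)"
proof
  assume "of_int (Gcd A) * y \<in> \<int>"
  moreover have "of_int a * y = of_int (a div Gcd A) * (of_int (Gcd A) * y)" if "a \<in> A" for a
    using that by (simp flip: mult.assoc of_int_mult add: Gcd_dvd)
  ultimately show "\<forall>a\<in>A. of_int a * y \<in> \<int>"
    by simp
next
  show "\<forall>a\<in>A. of_int a * y \<in> \<int> \<Longrightarrow> of_int (Gcd A) * y \<in> \<int>"
    using assms
  proof (induction A rule: finite_induct)
    case (insert a A)
    obtain u v where uv: "u * a + v * Gcd A = gcd a (Gcd A)"
      using bezout_int by blast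
    have "of_int (Gcd (insert a A)) * y = of_int (u * a + v * Gcd A) * y"
      by (simp add: uv)
    also have "\<dots> = of_int u * (of_int a * y) + of_int v * (of_int (Gcd A) * y)"
      by (simp add: algebra_simps)
    finally show ?case
      using insert by simp
  qed simp
qed

lemma coprime_Gcd_if_residues_complete:
  fixes p :: int
  assumes "(\<lambda>d. d mod p) ` D = {0..<p}" "p > 1"
  shows "coprime (Gcd D) p"
proof -
  have "1 \<in> (\<lambda>d. d mod p) ` D"
    using assms by simp
  then obtain d where "d \<in> D" "d mod p = 1"
    by auto
  then have "Gcd D dvd d" by (simp add: Gcd_dvd)
  then have "gcd (Gcd D) p dvd d mod p"
    by (meson dvd_mod dvd_trans gcd_dvd1 gcd_dvd2)
  with \<open>d mod p = 1\<close> show ?thesis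
    by (simp add: coprime_iff_gcd_eq_1)
qed

lemma coprime_mult_in_Ints_iff_shift:
  fixes g p :: int and \<xi> :: real
  assumes "coprime g p" "p > 0"
  shows "of_int g * \<xi> \<in> \<int> \<longleftrightarrow> (\<exists>l\<in>{0..<p}. of_int g * ((\<xi> + of_int l) / of_int p) \<in> \<int>)"
proof
  assume "of_int g * \<xi> \<in> \<int>"
  then obtain k where k: "of_int g * \<xi> = of_int k"
    by (auto elim: Ints_cases)
  obtain u v where uv: "u * g + v * p = 1"
    using bezout_int[of g p] assms(1) by (auto simp: coprime_iff_gcd_eq_1)
  define l where "l = (- k * u) mod p"
  have "(k + g * l) mod p = (k + g * (- k * u)) mod p"
    unfolding l_def by (metis mod_add_right_eq mod_mult_right_eq)
  also have "k + g * (- k * u) = k * (u * g + v * p) - k * u * g"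
    unfolding uv by (simp add: algebra_simps)
  also have "\<dots> = (k * v) * p"
    by (simp add: algebra_simps)
  finally have "(k + g * l) mod p = 0"
    by simp
  then have "of_int (k + g * l) / of_int p \<in> (\<int> :: real set)"
    by (subst of_int_div_of_int_in_Ints_iff) (simp add: mod_eq_0_iff_dvd)
  also have "of_int (k + g * l) / of_int p = of_int g * ((\<xi> + of_int l) / of_int p)"
    using k by (simp add: algebra_simps add_divide_distrib)
  finally show "\<exists>l\<in>{0..<p}. of_int g * ((\<xi> + of_int l) / of_int p) \<in> \<int>"
    using assms(2) by (auto simp: l_def)
next
  assume "\<exists>l\<in>{0..<p}. of_int g * ((\<xi> + of_int l) / of_int p) \<in> \<int>"
  then obtain l n where n: "of_int g * ((\<xi> + of_int l) / of_int p) = of_int n"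
    by (auto elim: Ints_cases)
  then have "of_int g * \<xi> = of_int (p * n - g * l)"
    using assms(2) by (simp add: field_simps)
  then show "of_int g * \<xi> \<in> \<int>"
    by simp
qed

definition mask_poly :: "int set \<Rightarrow> real \<Rightarrow> complex" where
  "mask_poly D x = (\<Sum>d\<in>D. cis (2 * pi * of_int d * x))"

lemma mask_poly_phase_sum:
  fixes p :: int
  assumes "finite D" "p > 0" "inj_on (\<lambda>d. d mod p) D" "d0 \<in> D"
  shows "(\<Sum>l\<in>{0..<p}. cnj (cis (2 * pi * of_int d0 * ((\<xi> + of_int l) / of_int p)))
            * mask_poly D ((\<xi> + of_int l) / of_int p)) = of_int p"
proof -
  have phase_product: "cnj (cis (2 * pi * of_int d0 * ((\<xi> + of_int l) / of_int p)))
        * cis (2 * pi * of_int d * ((\<xi> + of_int l) / of_int p))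
      = cis (2 * pi * of_int (d - d0) * \<xi> / of_int p)
        * cis (2 * pi * of_int (d - d0) * of_int l / of_int p)" for d l
    unfolding cis_cnj cis_mult
    by (rule arg_cong[where f = cis]) (simp add: algebra_simps add_divide_distrib diff_divide_distrib)
  have inner: "(\<Sum>l\<in>{0..<p}. cis (2 * pi * of_int (d - d0) * of_int l / of_int p))
      = (if d = d0 then of_int p else 0)" if "d \<in> D" for d
  proof -
    have "p dvd d - d0 \<longleftrightarrow> d = d0"
      using assms(3,4) that by (auto simp: inj_on_def mod_eq_dvd_iff[symmetric])
    then show ?thesis
      by (subst sum_roots_of_unity[OF assms(2)]) simp
  qed
  have "(\<Sum>l\<in>{0..<p}. cnj (cis (2 * pi * of_int d0 * ((\<xi> + of_int l) / of_int p)))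
            * mask_poly D ((\<xi> + of_int l) / of_int p))
      = (\<Sum>d\<in>D. cis (2 * pi * of_int (d - d0) * \<xi> / of_int p)
          * (\<Sum>l\<in>{0..<p}. cis (2 * pi * of_int (d - d0) * of_int l / of_int p)))"
    unfolding mask_poly_def sum_distrib_left phase_product by (rule sum.swap)
  also have "\<dots> = (\<Sum>d\<in>D. if d = d0 then of_int p else 0)"
    by (intro sum.cong refl) (simp only: inner, simp)
  also have "\<dots> = of_int p"
    using assms(1,4) by simp
  finally show ?thesis .
qed

lemma mask_poly_parseval:
  fixes p :: int
  assumes "finite D" "p > 0" "inj_on (\<lambda>d. d mod p) D"
  shows "(\<Sum>l\<in>{0..<p}. (cmod (mask_poly D ((\<xi> + of_int l) / of_int p)))\<^sup>2) = of_int p * card D"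
proof -
  let ?x = "\<lambda>l. (\<xi> + of_int l) / of_int p"
  have "complex_of_real ((cmod (mask_poly D (?x l)))\<^sup>2)
      = (\<Sum>d0\<in>D. cnj (cis (2 * pi * of_int d0 * ?x l)) * mask_poly D (?x l))" for l
  proof -
    have "complex_of_real ((cmod (mask_poly D (?x l)))\<^sup>2) = cnj (mask_poly D (?x l)) * mask_poly D (?x l)"
      by (subst complex_norm_square) (rule mult.commute)
    also have "cnj (mask_poly D (?x l)) = (\<Sum>d0\<in>D. cnj (cis (2 * pi * of_int d0 * ?x l)))"
      by (simp add: mask_poly_def)
    finally show ?thesis
      by (simp add: sum_distrib_right)
  qed
  then have "complex_of_real (\<Sum>l\<in>{0..<p}. (cmod (mask_poly D (?x l)))\<^sup>2)
      = (\<Sum>l\<in>{0..<p}. \<Sum>d0\<in>D. cnj (cis (2 * pi * of_int d0 * ?x l)) * mask_poly D (?x l))"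
    by simp
  also have "\<dots> = (\<Sum>d0\<in>D. of_int p)"
    by (subst sum.swap, rule sum.cong[OF refl], rule mask_poly_phase_sum[OF assms])
  also have "\<dots> = complex_of_real (of_int p * card D)"
    by simp
  finally show ?thesis
    using of_real_eq_iff by blast
qed

lemma delta_hat_eq_mask_poly:
  "delta_hat (1 / of_int p) (of_int ` D) y = mask_poly D (y / of_int p) / of_nat (card D)"
proof -
  have inj: "inj_on (of_int :: int \<Rightarrow> real) D"
    by (simp add: inj_on_def)
  show ?thesis
    unfolding delta_hat_def mask_poly_def
    by (simp add: card_image[OF inj] sum.reindex[OF inj] mult_ac)
qed

lemma mask_poly_eq_card_if_Ints:
  assumes "\<forall>d\<in>D. of_int d * x \<in> \<int>"
  shows "mask_poly D x = of_nat (card D)"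
proof -
  have "cis (2 * pi * of_int d * x) = 1" if "d \<in> D" for d
    using assms that by (metis cis_multiple_2pi mult.assoc)
  then show ?thesis
    by (simp add: mask_poly_def)
qed

lemma mask_poly_vanishes_if_Ints_at:
  fixes p :: int
  assumes "finite D" "inj_on (\<lambda>d. d mod p) D" "int (card D) = p"
    and "l0 \<in> {0..<p}" "\<forall>d\<in>D. of_int d * ((\<xi> + of_int l0) / of_int p) \<in> \<int>"
    and "l \<in> {0..<p}" "l \<noteq> l0"
  shows "mask_poly D ((\<xi> + of_int l) / of_int p) = 0"
proof -
  let ?n = "\<lambda>l. (cmod (mask_poly D ((\<xi> + of_int l) / of_int p)))\<^sup>2"
  have "p > 0" using assms(4) by simp
  have "?n l0 = (of_int p)\<^sup>2"
    using mask_poly_eq_card_if_Ints[OF assms(5)] assms(3) by simp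
  moreover have "(\<Sum>l\<in>{0..<p}. ?n l) = (of_int p)\<^sup>2"
    using mask_poly_parseval[OF assms(1) \<open>p > 0\<close> assms(2)] assms(3) by (simp add: power2_eq_square)
  moreover have "(\<Sum>l\<in>{0..<p}. ?n l) = ?n l0 + (\<Sum>l\<in>{0..<p} - {l0}. ?n l)"
    using assms(4) by (simp add: sum.remove)
  ultimately have "(\<Sum>l\<in>{0..<p} - {l0}. ?n l) = 0"
    by simp
  then have "?n l = 0"
    using assms(6,7) by (subst (asm) sum_nonneg_eq_0_iff) auto
  then show ?thesis
    by simp
qed

lemma Ints_at_if_mask_poly_support_unique:
  fixes p :: int
  assumes "finite D" "p > 0" "inj_on (\<lambda>d. d mod p) D" "0 \<in> D"
    and unique: "\<forall>l1\<in>{0..<p}. \<forall>l2\<in>{0..<p}. mask_poly D ((\<xi> + of_int l1) / of_int p) \<noteq> 0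
        \<longrightarrow> mask_poly D ((\<xi> + of_int l2) / of_int p) \<noteq> 0 \<longrightarrow> l1 = l2"
  shows "\<exists>l0\<in>{0..<p}. \<forall>d\<in>D. of_int d * ((\<xi> + of_int l0) / of_int p) \<in> \<int>"
proof -
  let ?A = "\<lambda>l. mask_poly D ((\<xi> + of_int l) / of_int p)"
  let ?e = "\<lambda>d l. cis (2 * pi * of_int d * ((\<xi> + of_int l) / of_int p))"
  have total: "(\<Sum>l\<in>{0..<p}. ?A l) = of_int p"
    using mask_poly_phase_sum[OF assms(1-4), of \<xi>] by simp
  have "\<exists>l0\<in>{0..<p}. ?A l0 \<noteq> 0"
  proof (rule ccontr)
    assume "\<not> ?thesis"
    then have "(\<Sum>l\<in>{0..<p}. ?A l) = 0"
      by simp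
    with total assms(2) show False
      by simp
  qed
  then obtain l0 where l0: "l0 \<in> {0..<p}" "?A l0 \<noteq> 0"
    by blast
  have off: "?A l = 0" if "l \<in> {0..<p}" "l \<noteq> l0" for l
    using unique l0 that by blast
  have single: "(\<Sum>l\<in>{0..<p}. cnj (?e d l) * ?A l) = cnj (?e d l0) * ?A l0" for d
  proof -
    have "(\<Sum>l\<in>{0..<p}. cnj (?e d l) * ?A l) = (\<Sum>l\<in>{0..<p}. if l = l0 then cnj (?e d l0) * ?A l0 else 0)"
      by (intro sum.cong refl) (simp add: off)
    then show ?thesis
      using l0(1) by simp
  qed
  have "?A l0 = of_int p"
    using mask_poly_phase_sum[OF assms(1-4), of \<xi>] single[of 0] by simp
  have "of_int d * ((\<xi> + of_int l0) / of_int p) \<in> \<int>" if "d \<in> D" for d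
  proof -
    have "cnj (?e d l0) * of_int p = of_int p"
      using mask_poly_phase_sum[OF assms(1-3) that, of \<xi>] single[of d] \<open>?A l0 = of_int p\<close> by simp
    then have "?e d l0 = 1"
      using assms(2) by simp
    then show ?thesis
      by (simp add: cis_2pi_eq_1_iff[symmetric] mult.assoc)
  qed
  with l0(1) show ?thesis
    by blast
qed

lemma mask_poly_two_nonzero_iff:
  fixes p :: int
  assumes "finite D" "inj_on (\<lambda>d. d mod p) D" "int (card D) = p" "0 \<in> D"
  shows "(\<exists>l1 l2. l1 \<in> {0..<p} \<and> l2 \<in> {0..<p} \<and> l1 \<noteq> l2
            \<and> mask_poly D ((\<xi> + of_int l1) / of_int p) \<noteq> 0 \<and> mask_poly D ((\<xi> + of_int l2) / of_int p) \<noteq> 0)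
     \<longleftrightarrow> \<not> (\<exists>l0\<in>{0..<p}. \<forall>d\<in>D. of_int d * ((\<xi> + of_int l0) / of_int p) \<in> \<int>)"
proof -
  have "p > 0"
    using assms(1,3,4) by (auto simp: card_gt_0_iff)
  show ?thesis
  proof
    assume "\<exists>l1 l2. l1 \<in> {0..<p} \<and> l2 \<in> {0..<p} \<and> l1 \<noteq> l2
        \<and> mask_poly D ((\<xi> + of_int l1) / of_int p) \<noteq> 0 \<and> mask_poly D ((\<xi> + of_int l2) / of_int p) \<noteq> 0"
    then obtain l1 l2 where l12: "l1 \<in> {0..<p}" "l2 \<in> {0..<p}" "l1 \<noteq> l2"
        "mask_poly D ((\<xi> + of_int l1) / of_int p) \<noteq> 0" "mask_poly D ((\<xi> + of_int l2) / of_int p) \<noteq> 0"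
      by blast
    show "\<not> (\<exists>l0\<in>{0..<p}. \<forall>d\<in>D. of_int d * ((\<xi> + of_int l0) / of_int p) \<in> \<int>)"
    proof
      assume "\<exists>l0\<in>{0..<p}. \<forall>d\<in>D. of_int d * ((\<xi> + of_int l0) / of_int p) \<in> \<int>"
      then obtain l0 where "l0 \<in> {0..<p}" "\<forall>d\<in>D. of_int d * ((\<xi> + of_int l0) / of_int p) \<in> \<int>"
        by blast
      from mask_poly_vanishes_if_Ints_at[OF assms(1-3) this] l12 show False
        by (cases "l1 = l0") auto
    qed
  next
    assume "\<not> (\<exists>l0\<in>{0..<p}. \<forall>d\<in>D. of_int d * ((\<xi> + of_int l0) / of_int p) \<in> \<int>)"
    with Ints_at_if_mask_poly_support_unique[OF assms(1) \<open>p > 0\<close> assms(2,4)]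
    show "\<exists>l1 l2. l1 \<in> {0..<p} \<and> l2 \<in> {0..<p} \<and> l1 \<noteq> l2
        \<and> mask_poly D ((\<xi> + of_int l1) / of_int p) \<noteq> 0 \<and> mask_poly D ((\<xi> + of_int l2) / of_int p) \<noteq> 0"
      by blast
  qed
qed

theorem lemma3p3:
  fixes p :: int and D L :: "int set"
  assumes "hadamard_triple p D L"
    and "p > 1"
    and "0 \<in> D"
    and "\<forall>d\<in>D. d \<ge> 0"
    and "p = int (card D)"
  shows "T_set p D = {0..<1} - {of_int k / of_int (Gcd D) | k :: int. True}"
proof -
  have fin: "finite D"
    using assms(1) by (simp add: hadamard_triple_def)
  have inj: "inj_on (\<lambda>d. d mod p) D"
    using assms(1) by (rule hadamard_triple_inj_on_mod)
  have "p > 0"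
    using assms(2) by simp
  have "(\<lambda>d. d mod p) ` D = {0..<p}"
    using \<open>p > 0\<close> fin inj assms(5)[symmetric] by (rule mod_image_eq_atLeastLessThan)
  then have coprime: "coprime (Gcd D) p"
    using assms(2) by (rule coprime_Gcd_if_residues_complete)
  have "Gcd D \<noteq> 0"
  proof
    assume "Gcd D = 0"
    with coprime have "p dvd 1"
      by simp
    with assms(2) show False
      using zdvd_imp_le by fastforce
  qed
  have delta_nonzero: "delta_hat (1 / of_int p) (of_int ` D) y \<noteq> 0 \<longleftrightarrow> mask_poly D (y / of_int p) \<noteq> 0" for y
    using fin assms(3) by (auto simp: delta_hat_eq_mask_poly card_gt_0_iff)
  have index_range: "{0..p - 1} = {0..<p}"
    by auto
  have "T_set p D = {\<xi>. 0 \<le> \<xi> \<and> \<xi> < 1 \<and> \<not> of_int (Gcd D) * \<xi> \<in> \<int>}"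
    unfolding T_set_def index_range delta_nonzero mask_poly_two_nonzero_iff[OF fin inj assms(5)[symmetric] assms(3)]
      Gcd_mult_in_Ints_iff[OF fin, symmetric] coprime_mult_in_Ints_iff_shift[OF coprime \<open>p > 0\<close>, symmetric]
    by simp
  moreover have "\<xi> \<in> {of_int k / of_int (Gcd D) | k :: int. True} \<longleftrightarrow> of_int (Gcd D) * \<xi> \<in> \<int>" for \<xi> :: real
    using \<open>Gcd D \<noteq> 0\<close> by (auto elim!: Ints_cases simp: field_simps)
  ultimately show ?thesis
    by auto
qed

end
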